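(* Let $U:SO(3)\times\mathbb{R}\to\mathbb{R}_{\ge0}$ be a potential function with respect to $\mathcal{A}_o=(I_3,0)$ and let $\Theta\subset\mathbb{R}$ be a nonempty finite set. Suppose that: - $\mathcal{A}_o\in\Psi_U$ and there is $\delta>0$ with $\mu_U(R,\theta)>\delta$ for all $(R,\theta)\in\Psi_U\setminus\{\mathcal{A}_o\}$; - there is $c_\psi>0$ with $\|\psi(R^\top\nabla_RU(R,\theta))\|\le c_\psi$ for all $(R,\theta)\in SO(3)\times\mathbb{R}$. Let $0<\delta'<\delta$ and $0<\varrho<(\delta-\delta')/c_\psi^2$. Then $\mu_W(R,\theta,\zeta)>\delta'$ for all $(R,\theta,\zeta)\in\Psi_W\setminus\{\widehat{\mathcal{A}}_o\}$.
   Context: Notation. - $\psi(A)=\tfrac12[a_{32}-a_{23},a_{13}-a_{31},a_{21}-a_{12}]^\top$ for $A=[a_{ij}]\in\mathbb{R}^{3\times3}$. - $\nabla_RU(R,\theta)\in T_RSO(3)=\{R\Omega:\Omega^\top=-\Omega\}$ is the gradient in $R$ with respect to the metric $\langle R\Omega_1,R\Omega_2\rangle_R=\mathrm{tr}(\Omega_1^\top\Omega_2)$, and $\nabla_\theta U$ is the partial derivative in $\theta$. - A potential function with respect to $(I_3,0)$ is continuously differentiable, nonnegative, and vanishes exactly at $(I_3,0)$. - $\Psi_U=\{(R,\theta):\nabla_RU=0,\nabla_\theta U=0\}$ and $\mu_U(R,\theta)=U(R,\theta)-\min_{\theta'\in\Theta}U(R,\theta')$. - $W(R,\theta,\zeta)=U(R,\theta)+\varrho\|\zeta-\psi(R^\top\nabla_RU(R,\theta))\|^2$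 on $SO(3)\times\mathbb{R}\times\mathbb{R}^3$, and $\mu_W(R,\theta,\zeta)=W(R,\theta,\zeta)-\min_{\theta'\in\Theta}W(R,\theta',\zeta)$. - $\widehat{\mathcal{A}}_o=(I_3,0,0)$ and $\Psi_W=\{(R,\theta,\zeta):(R,\theta)\in\Psi_U,\ \zeta=0\}$. *)

theory Defs
  imports "HOL-Analysis.Analysis"
begin

type_synonym mat3 = "real^3^3"

definition SO3 :: "mat3 set" where
  "SO3 = {R. orthogonal_matrix R \<and> det R = 1}"

text \<open>psi(A) = 1/2 [a32 - a23, a13 - a31, a21 - a12]; indices 1,2,3 of the paper are
  the elements 1,2,3 of the numeral type 3.\<close>
definition psi :: "mat3 \<Rightarrow> real^3" where
  "psi A = (\<chi> k. if k = 1 then (A$3$2 - A$2$3) / 2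
                 else if k = 2 then (A$1$3 - A$3$1) / 2
                 else (A$2$1 - A$1$2) / 2)"

definition tangent_SO3 :: "mat3 \<Rightarrow> mat3 set" where
  "tangent_SO3 R = {R ** \<Omega> | \<Omega>. transpose \<Omega> = - \<Omega>}"

text \<open>Metric <R Om1, R Om2>_R = tr(Om1^T Om2).\<close>
definition metric_SO3 :: "mat3 \<Rightarrow> mat3 \<Rightarrow> mat3 \<Rightarrow> real" where
  "metric_SO3 R G V = trace (transpose (transpose R ** G) ** (transpose R ** V))"

text \<open>gR, gth are the gradients (w.r.t. R in the metric above, and w.r.t. theta) of
  U : SO(3) x R -> R, and U is continuously differentiable: the gradients are continuous
  and the chain rule holds along every differentiable curve in SO(3) x R.\<close>
definition C1_gradients ::
  "(mat3 \<Rightarrow> real \<Rightarrow> real) \<Rightarrow> (mat3 \<Rightarrow> real \<Rightarrow> mat3) \<Rightarrow> (mat3 \<Rightarrow> real \<Rightarrow> real) \<Rightarrow> bool" where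
  "C1_gradients U gR gth \<longleftrightarrow>
     continuous_on (SO3 \<times> UNIV) (\<lambda>(R, \<theta>). gR R \<theta>) \<and>
     continuous_on (SO3 \<times> UNIV) (\<lambda>(R, \<theta>). gth R \<theta>) \<and>
     (\<forall>R\<in>SO3. \<forall>\<theta>. gR R \<theta> \<in> tangent_SO3 R) \<and>
     (\<forall>(\<gamma>::real \<Rightarrow> mat3) (\<eta>::real \<Rightarrow> real) t V a.
        (\<forall>s. \<gamma> s \<in> SO3) \<longrightarrow> (\<gamma> has_vector_derivative V) (at t) \<longrightarrow>
        (\<eta> has_real_derivative a) (at t) \<longrightarrow>
        ((\<lambda>s. U (\<gamma> s) (\<eta> s)) has_real_derivative
           (metric_SO3 (\<gamma> t) (gR (\<gamma> t) (\<eta> t)) V + gth (\<gamma> t) (\<eta> t) * a)) (at t))"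

definition potential_function ::
  "(mat3 \<Rightarrow> real \<Rightarrow> real) \<Rightarrow> (mat3 \<Rightarrow> real \<Rightarrow> mat3) \<Rightarrow> (mat3 \<Rightarrow> real \<Rightarrow> real) \<Rightarrow> bool" where
  "potential_function U gR gth \<longleftrightarrow> C1_gradients U gR gth \<and>
     (\<forall>R\<in>SO3. \<forall>\<theta>. U R \<theta> \<ge> 0) \<and>
     (\<forall>R\<in>SO3. \<forall>\<theta>. U R \<theta> = 0 \<longleftrightarrow> R = mat 1 \<and> \<theta> = 0)"

definition Psi_U :: "(mat3 \<Rightarrow> real \<Rightarrow> mat3) \<Rightarrow> (mat3 \<Rightarrow> real \<Rightarrow> real) \<Rightarrow> (mat3 \<times> real) set" where
  "Psi_U gR gth = {(R, \<theta>). R \<in> SO3 \<and> gR R \<theta> = 0 \<and> gth R \<theta> = 0}"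

definition mu_U :: "(mat3 \<Rightarrow> real \<Rightarrow> real) \<Rightarrow> real set \<Rightarrow> mat3 \<Rightarrow> real \<Rightarrow> real" where
  "mu_U U \<Theta> R \<theta> = U R \<theta> - Min ((\<lambda>\<theta>'. U R \<theta>') ` \<Theta>)"

definition W_fun :: "(mat3 \<Rightarrow> real \<Rightarrow> real) \<Rightarrow> (mat3 \<Rightarrow> real \<Rightarrow> mat3) \<Rightarrow> real \<Rightarrow>
    mat3 \<Rightarrow> real \<Rightarrow> real^3 \<Rightarrow> real" where
  "W_fun U gR \<rho> R \<theta> \<zeta> = U R \<theta> + \<rho> * (norm (\<zeta> - psi (transpose R ** gR R \<theta>)))\<^sup>2"

definition mu_W :: "(mat3 \<Rightarrow> real \<Rightarrow> real) \<Rightarrow> (mat3 \<Rightarrow> real \<Rightarrow> mat3) \<Rightarrow> real \<Rightarrow> real set \<Rightarrow>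
    mat3 \<Rightarrow> real \<Rightarrow> real^3 \<Rightarrow> real" where
  "mu_W U gR \<rho> \<Theta> R \<theta> \<zeta> =
     W_fun U gR \<rho> R \<theta> \<zeta> - Min ((\<lambda>\<theta>'. W_fun U gR \<rho> R \<theta>' \<zeta>) ` \<Theta>)"

definition Psi_W :: "(mat3 \<Rightarrow> real \<Rightarrow> mat3) \<Rightarrow> (mat3 \<Rightarrow> real \<Rightarrow> real) \<Rightarrow> (mat3 \<times> real \<times> (real^3)) set" where
  "Psi_W gR gth = {(R, \<theta>, \<zeta>). (R, \<theta>) \<in> Psi_U gR gth \<and> \<zeta> = 0}"

end

theory Submission
  imports Defs
begin

text \<open>At a critical point of \<open>U\<close> with \<open>\<zeta> = 0\<close> the penalty term of \<open>W\<close> vanishes, so \<open>W = U\<close>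
  there, while at every \<open>\<theta>'\<close> the penalty is at most \<open>\<rho> c\<^sub>\<psi>\<^sup>2\<close>. Hence
  \<open>\<mu>\<^sub>W \<ge> \<mu>\<^sub>U - \<rho> c\<^sub>\<psi>\<^sup>2 > \<delta> - (\<delta> - \<delta>') = \<delta>'\<close>.\<close>

lemma psi_zero [simp]: "psi 0 = 0"
  by (simp add: psi_def vec_eq_iff)

lemma W_fun_eq_U_if_gradient_zero:
  assumes "gR R \<theta> = 0"
  shows "W_fun U gR \<rho> R \<theta> 0 = U R \<theta>"
  using assms by (simp add: W_fun_def)

lemma W_fun_le_U_add:
  assumes "\<rho> \<ge> 0" and "norm (psi (transpose R ** gR R \<theta>)) \<le> c"
  shows "W_fun U gR \<rho> R \<theta> 0 \<le> U R \<theta> + \<rho> * c\<^sup>2"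
proof -
  have "(norm (psi (transpose R ** gR R \<theta>)))\<^sup>2 \<le> c\<^sup>2"
    using assms(2) by (simp add: power_mono)
  then show ?thesis
    using assms(1) by (simp add: W_fun_def mult_left_mono)
qed

lemma Min_image_le_Min_image_add:
  fixes f g :: "'a \<Rightarrow> 'b::linordered_ab_group_add"
  assumes "finite A" "A \<noteq> {}" and "\<And>x. x \<in> A \<Longrightarrow> g x \<le> f x + c"
  shows "Min (g ` A) \<le> Min (f ` A) + c"
proof -
  have "Min (f ` A) \<in> f ` A"
    using assms(1,2) by (intro Min_in) auto
  then obtain x where x: "x \<in> A" and Min_f: "Min (f ` A) = f x"
    by auto
  have "Min (g ` A) \<le> g x"
    using assms(1) x by simp
  also have "\<dots> \<le> Min (f ` A) + c"
    unfolding Min_f using assms(3) x .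
  finally show ?thesis .
qed

lemma mu_W_ge_mu_U_diff_if_gradient_zero:
  assumes "finite \<Theta>" "\<Theta> \<noteq> {}" and "\<rho> \<ge> 0" and "gR R \<theta> = 0"
    and "\<And>\<theta>'. norm (psi (transpose R ** gR R \<theta>')) \<le> c"
  shows "mu_W U gR \<rho> \<Theta> R \<theta> 0 \<ge> mu_U U \<Theta> R \<theta> - \<rho> * c\<^sup>2"
proof -
  have "Min ((\<lambda>\<theta>'. W_fun U gR \<rho> R \<theta>' 0) ` \<Theta>) \<le> Min ((\<lambda>\<theta>'. U R \<theta>') ` \<Theta>) + \<rho> * c\<^sup>2"
    using assms by (intro Min_image_le_Min_image_add W_fun_le_U_add)
  then show ?thesis
    using assms(4) by (simp add: mu_W_def mu_U_def W_fun_eq_U_if_gradient_zero)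
qed

theorem lemma1:
  fixes U :: "mat3 \<Rightarrow> real \<Rightarrow> real"
    and gR :: "mat3 \<Rightarrow> real \<Rightarrow> mat3"
    and gth :: "mat3 \<Rightarrow> real \<Rightarrow> real"
    and \<Theta> :: "real set"
    and \<delta> \<delta>' c\<^sub>\<psi> \<rho> :: real
  assumes pot: "potential_function U gR gth"
    and fin: "finite \<Theta>" and ne: "\<Theta> \<noteq> {}"
    and crit: "(mat 1, 0) \<in> Psi_U gR gth"
    and dpos: "\<delta> > 0"
    and gap: "\<forall>(R, \<theta>) \<in> Psi_U gR gth - {(mat 1, 0)}. mu_U U \<Theta> R \<theta> > \<delta>"
    and cpos: "c\<^sub>\<psi> > 0"
    and bnd: "\<forall>R\<in>SO3. \<forall>\<theta>. norm (psi (transpose R ** gR R \<theta>)) \<le> c\<^sub>\<psi>"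
    and d': "0 < \<delta>'" "\<delta>' < \<delta>"
    and rho: "0 < \<rho>" "\<rho> < (\<delta> - \<delta>') / c\<^sub>\<psi>\<^sup>2"
  shows "\<forall>(R, \<theta>, \<zeta>) \<in> Psi_W gR gth - {(mat 1, 0, 0)}. mu_W U gR \<rho> \<Theta> R \<theta> \<zeta> > \<delta>'"
proof -
  have "mu_W U gR \<rho> \<Theta> R \<theta> 0 > \<delta>'"
    if U_crit: "(R, \<theta>) \<in> Psi_U gR gth" and ne_origin: "(R, \<theta>) \<noteq> (mat 1, 0)" for R \<theta>
  proof -
    have mu_U_gap: "mu_U U \<Theta> R \<theta> > \<delta>"
      using U_crit ne_origin gap by blast
    have "R \<in> SO3" "gR R \<theta> = 0"
      using U_crit by (simp_all add: Psi_U_def)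
    then have "mu_W U gR \<rho> \<Theta> R \<theta> 0 \<ge> mu_U U \<Theta> R \<theta> - \<rho> * c\<^sub>\<psi>\<^sup>2"
      using fin ne rho(1) bnd by (intro mu_W_ge_mu_U_diff_if_gradient_zero) auto
    moreover have "\<rho> * c\<^sub>\<psi>\<^sup>2 < \<delta> - \<delta>'"
      using rho(2) cpos by (simp add: pos_less_divide_eq)
    ultimately show ?thesis
      using mu_U_gap by linarith
  qed
  then show ?thesis
    unfolding Psi_W_def by blast
qed

end
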